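(* For every $d$ with $0\le d\le\rho(m)-1$ and every integer $t$ with $L_1(d)+h-\rho(m)+d+1\le t\le L_1(d)+h-1$, we have $z(t,d)=y(t)$.
   Context: For $u\in\mathbb{R}$ let $\mathbf 1[u]=1$ if $u\ge 0$ and $\mathbf 1[u]=0$ if $u<0$. Let $m$ be a positive integer and let $\rho(m)$ denote the number of primes $p$ with $2m<p<3m$; assume $\rho(m)\ge 2$. List these primes as $p_0>p_1>\dots>p_{\rho(m)-1}$ and put $\alpha_i=3m-p_i$. Let $k=(6m-1)\rho(m)$, $\mu_i=\lfloor k/p_i\rfloor$, $\beta_i=k-p_i\mu_i$. Define weights $\bar a_j$, $1\le j\le k$: if $\rho(m)$ is even, $\bar a_j=2$ if $j=\ell p_i$ for some $i$ and some $\ell$ with $1\le \ell\le 3\rho(m)/2$, $\bar a_j=-2$ if $j=\ell p_i$ with $3\rho(m)/2<\ell\le 2\rho(m)$, and $\bar a_j=0$ otherwise; if $\rho(m)$ is odd, $\bar a_j=2$ if $j=\ell p_i$ with $1\le\ell\le (3\rho(m)-1)/2$, $\bar a_j=-2$ if $j=\ell p_i$ with $(3\rho(m)+1)/2\le \ell\le 2\rho(m)-2$, $\bar a_j=-1$ if $j=\ell p_i$ with $\ell\in\{2\rho(m)-1,2\rho(m)\}$, and $\bar a_j=0$ otherwise (well defined since the sets $\{\ell p_i:1\le\ell\le2\rho(m)\}$ are pairwise disjoint). Let $\bar\theta=2\rho(m)$. For each $i$ define $x^{\alpha_i}(t)$ for $0\le t\le k-1$ by $x^{\alpha_i}(t)=1$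 if $t=\beta_i+\ell p_i$ for some $0\le \ell\le\mu_i-1$ and $x^{\alpha_i}(t)=0$ otherwise, and for $t\ge k$ by $x^{\alpha_i}(t)=\mathbf 1\big[\sum_{j=1}^k \bar a_j x^{\alpha_i}(t-j)-\bar\theta\big]$. Let $h=\rho(m)k$. For $1\le f\le h$ let $b_f=\bar a_j$ if $f=\rho(m)j$ with $1\le j\le k$, and $b_f=0$ otherwise. Define $(y(n))_{n\ge0}$ by $y(\rho(m)j+i)=x^{\alpha_i}(1+j)$ for $0\le j\le k-1$, $0\le i\le\rho(m)-1$, and $y(n)=\mathbf 1\big[\sum_{f=1}^h b_f y(n-f)-\bar\theta\big]$ for $n\ge h$. Let $L_1(d)=\rho(m)\cdot\mathrm{lcm}(p_0,\dots,p_d)$ for $0\le d\le\rho(m)-1$. For $0\le d\le\rho(m)-1$ let $B_0(d)=\{f\in\mathbb Z:\ 1\le f\le h-d,\ y(h+L_1(d)-\rho(m)-f)=1\}$, $B_{\ell+1}(d)=\{1+f: f\in B_\ell(d)\}$ for $\ell\ge0$, $A(d)=\bigcup_{\ell=0}^{d}B_\ell(d)$, and $Tot(d)=|B_0(d)|$. Fix a real number $\lambda$ with $-1\le\lambda<0$. Put $\beta(d)=\lambda/Tot(d)$, $\xi(d)=\lambda-\beta(d)/8$, $\theta_2(d)=\bar\theta+\xi(d)$, and for $1\le f\le h$ let $c(f,d)=b_f+\beta(d)$ if $f\in A(d)$ and $c(f,d)=b_f$ otherwise. Define $(z(n,d))_{n\ge0}$ by $z(n,d)=y(n)$ for $0\le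 n\le h-1$ and $z(n,d)=\mathbf 1\big[\sum_{f=1}^h c(f,d)\,z(n-f,d)-\theta_2(d)\big]$ for $n\ge h$. *)

theory Defs
  imports Complex_Main "HOL-Computational_Algebra.Primes"
begin

definition step :: "real \<Rightarrow> real" where
  "step u = (if u \<ge> 0 then 1 else 0)"

definition primeset :: "nat \<Rightarrow> nat set" where
  "primeset m = {p. prime p \<and> 2*m < p \<and> p < 3*m}"

definition rho :: "nat \<Rightarrow> nat" where
  "rho m = card (primeset m)"

definition pr :: "nat \<Rightarrow> nat \<Rightarrow> nat" where
  "pr m i = rev (sorted_list_of_set (primeset m)) ! i"

definition alpha :: "nat \<Rightarrow> nat \<Rightarrow> nat" where
  "alpha m i = 3*m - pr m i"

definition kk :: "nat \<Rightarrow> nat" where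
  "kk m = (6*m - 1) * rho m"

definition mu :: "nat \<Rightarrow> nat \<Rightarrow> nat" where
  "mu m i = kk m div pr m i"

definition beta0 :: "nat \<Rightarrow> nat \<Rightarrow> nat" where
  "beta0 m i = kk m - pr m i * mu m i"

text \<open>weight attached to the multiple l * p_i\<close>
definition wt :: "nat \<Rightarrow> nat \<Rightarrow> real" where
  "wt m l = (if even (rho m) then
               (if 1 \<le> l \<and> 2 * l \<le> 3 * rho m then 2
                else if 3 * rho m < 2 * l \<and> l \<le> 2 * rho m then -2 else 0)
             else
               (if 1 \<le> l \<and> 2 * l \<le> 3 * rho m - 1 then 2
                else if 3 * rho m + 1 \<le> 2 * l \<and> l + 2 \<le> 2 * rho m then -2
                else if l = 2 * rho m - 1 \<or> l = 2 * rho m then -1 else 0))"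

definition abar :: "nat \<Rightarrow> nat \<Rightarrow> real" where
  "abar m j = (if \<exists>i l. i < rho m \<and> 1 \<le> l \<and> l \<le> 2 * rho m \<and> j = l * pr m i
               then wt m (SOME l. \<exists>i. i < rho m \<and> 1 \<le> l \<and> l \<le> 2 * rho m \<and> j = l * pr m i)
               else 0)"

definition thetabar :: "nat \<Rightarrow> real" where
  "thetabar m = 2 * real (rho m)"

function xs :: "nat \<Rightarrow> nat \<Rightarrow> nat \<Rightarrow> real" where
  "xs m i t = (if t < kk m then
                 (if \<exists>l. l < mu m i \<and> t = beta0 m i + l * pr m i then 1 else 0)
               else step ((\<Sum>j\<in>{1..kk m}. abar m j * xs m i (t - j)) - thetabar m))"
  by auto
termination by (relation "measure (\<lambda>(m,i,t). t)") auto

definition hh :: "nat \<Rightarrow> nat" where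
  "hh m = rho m * kk m"

definition bb :: "nat \<Rightarrow> nat \<Rightarrow> real" where
  "bb m f = (if rho m dvd f \<and> 1 \<le> f div rho m \<and> f div rho m \<le> kk m
             then abar m (f div rho m) else 0)"

function ys :: "nat \<Rightarrow> nat \<Rightarrow> real" where
  "ys m n = (if n < hh m then xs m (n mod rho m) (1 + n div rho m)
             else step ((\<Sum>f\<in>{1..hh m}. bb m f * ys m (n - f)) - thetabar m))"
  by auto
termination by (relation "measure (\<lambda>(m,n). n)") auto

definition L1 :: "nat \<Rightarrow> nat \<Rightarrow> nat" where
  "L1 m d = rho m * Lcm (pr m ` {..d})"

definition B0 :: "nat \<Rightarrow> nat \<Rightarrow> nat set" where
  "B0 m d = {f. 1 \<le> f \<and> f \<le> hh m - d \<and> ys m (hh m + L1 m d - rho m - f) = 1}"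

definition Bl :: "nat \<Rightarrow> nat \<Rightarrow> nat \<Rightarrow> nat set" where
  "Bl m d l = (\<lambda>f. f + l) ` B0 m d"

definition AA :: "nat \<Rightarrow> nat \<Rightarrow> nat set" where
  "AA m d = (\<Union>l\<in>{0..d}. Bl m d l)"

definition Tot :: "nat \<Rightarrow> nat \<Rightarrow> nat" where
  "Tot m d = card (B0 m d)"

definition betad :: "nat \<Rightarrow> real \<Rightarrow> nat \<Rightarrow> real" where
  "betad m lam d = lam / real (Tot m d)"

definition xid :: "nat \<Rightarrow> real \<Rightarrow> nat \<Rightarrow> real" where
  "xid m lam d = lam - betad m lam d / 8"

definition theta2 :: "nat \<Rightarrow> real \<Rightarrow> nat \<Rightarrow> real" where
  "theta2 m lam d = thetabar m + xid m lam d"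

definition cc :: "nat \<Rightarrow> real \<Rightarrow> nat \<Rightarrow> nat \<Rightarrow> real" where
  "cc m lam f d = (if f \<in> AA m d then bb m f + betad m lam d else bb m f)"

function zs :: "nat \<Rightarrow> real \<Rightarrow> nat \<Rightarrow> nat \<Rightarrow> real" where
  "zs m lam n d = (if n < hh m then ys m n
                   else step ((\<Sum>f\<in>{1..hh m}. cc m lam f d * zs m lam (n - f) d) - theta2 m lam d))"
  by auto
termination by (relation "measure (\<lambda>(m,lam,n,d). n)") auto

end

theory Submission
  imports Defs
begin

text \<open>
  Each single-prime network \<open>xs m i\<close> produces the periodic pulse train of
  the prime \<open>p\<^sub>i\<close> (firing exactly at the times \<open>\<equiv> kk m (mod p\<^sub>i)\<close>), because its weights along
  \<open>p\<^sub>i\<close> add up to the threshold \<open>2 rho m\<close>, while any other prime \<open>p\<^sub>i'\<close> meets a given pulse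
  train at most once among its first \<open>2 rho m\<close> multiples.  Interleaving, \<open>ys\<close> restricted to
  the residue class \<open>i\<close> modulo \<open>rho m\<close> is that pulse train, and the same threshold estimates
  hold for any input dominated by it.

  For the perturbed network \<open>zs\<close> we prove by strong induction on time that it never fires
  where \<open>ys\<close> is silent (the perturbation lowers the input) and that it agrees with \<open>ys\<close> on the
  residue classes above \<open>d\<close>.  For the latter, the perturbation \<open>betad\<close> is weighed against the
  number of perturbed lags that see activity: a rigidity argument (gaps between firing times in
  two residue classes are divisible by two distinct primes whose product exceeds \<open>kk m\<close>)
  bounds this number by \<open>rho m (d + 1)\<close>, whereas an explicit construction shows
  \<open>Tot m d \<ge> rho m\<^sup>2\<close>; the shift \<open>xid\<close> of the threshold then absorbs the loss.  The theorem is
  the instance of this invariant at the times of the final block whose residue exceeds \<open>d\<close>.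
\<close>

declare xs.simps[simp del] ys.simps[simp del] zs.simps[simp del]

lemma primeset_finite: "finite (primeset m)"
  unfolding primeset_def by (rule finite_subset[of _ "{..<3*m}"]) auto

lemma pr_mem: "i < rho m \<Longrightarrow> pr m i \<in> primeset m"
proof -
  assume "i < rho m"
  let ?ps = "rev (sorted_list_of_set (primeset m))"
  have "length ?ps = rho m" by (simp add: rho_def primeset_finite)
  then have "?ps ! i \<in> set ?ps" using \<open>i < rho m\<close> by (metis nth_mem)
  then show ?thesis by (simp add: pr_def primeset_finite)
qed

lemma pr_inj: "i < rho m \<Longrightarrow> j < rho m \<Longrightarrow> pr m i = pr m j \<Longrightarrow> i = j"
proof -
  assume a: "i < rho m" "j < rho m" "pr m i = pr m j"
  let ?ps = "rev (sorted_list_of_set (primeset m))"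
  have "length ?ps = rho m" by (simp add: rho_def primeset_finite)
  moreover have "distinct ?ps" by simp
  ultimately show ?thesis using a unfolding pr_def by (simp add: nth_eq_iff_index_eq)
qed

lemma pr_props:
  assumes "i < rho m"
  shows "prime (pr m i)" "2*m < pr m i" "pr m i < 3*m"
  using pr_mem[OF assms] by (auto simp: primeset_def)

lemma pr_pos: "i < rho m \<Longrightarrow> 0 < pr m i"
  using pr_props(1) prime_gt_0_nat by blast

text \<open>The primes in \<open>(2m, 3m)\<close> are odd, so there are at most \<open>m/2\<close> of them.\<close>

lemma rho_bound: "2 * rho m \<le> m"
proof -
  define g where "g p = (p - (2*m+1)) div 2" for p
  have odd: "odd p" "2*m < p" "p < 3*m" if "p \<in> primeset m" for p
  proof -
    from that have "prime p" "2*m < p" "p < 3*m" unfolding primeset_def by auto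
    then show "odd p" "2*m < p" "p < 3*m" using prime_odd_nat[of p] by auto
  qed
  have sub: "g ` primeset m \<subseteq> {..<m div 2}"
  proof
    fix x assume "x \<in> g ` primeset m"
    then obtain p where p: "p \<in> primeset m" "x = g p" by auto
    from odd[OF p(1)] show "x \<in> {..<m div 2}"
      using p(2) unfolding g_def by (cases "even m"; auto elim!: oddE evenE)
  qed
  have "inj_on g (primeset m)"
  proof (rule inj_onI)
    fix p q assume pq: "p \<in> primeset m" "q \<in> primeset m" "g p = g q"
    from odd[OF pq(1)] odd[OF pq(2)] show "p = q" using pq(3) unfolding g_def by (auto elim!: oddE)
  qed
  then have "rho m = card (g ` primeset m)" unfolding rho_def by (simp add: card_image)
  also have "\<dots> \<le> m div 2" using card_mono[OF _ sub] by simp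
  finally show ?thesis by linarith
qed

lemma pr_gt_twice_rho: "i < rho m \<Longrightarrow> 2 * rho m < pr m i"
  using rho_bound[of m] pr_props(2)[of i m] by linarith

text \<open>A multiple \<open>l * p\<^sub>i'\<close> with \<open>1 \<le> l \<le> 2 rho m\<close> is not divisible by another prime
  \<open>p\<^sub>i\<close>, because \<open>p\<^sub>i > 2 rho m\<close>.\<close>

lemma pr_not_dvd_multiple:
  assumes "i < rho m" "i' < rho m" "i \<noteq> i'" "1 \<le> l" "l \<le> 2*rho m"
  shows "\<not> pr m i dvd l * pr m i'"
proof
  assume d: "pr m i dvd l * pr m i'"
  have pi: "prime (pr m i)" "prime (pr m i')" using assms pr_props by auto
  have "pr m i \<noteq> pr m i'" using assms pr_inj by blast
  then have "\<not> pr m i dvd pr m i'" using pi primes_dvd_imp_eq by blast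
  then have "pr m i dvd l" using d pi(1) prime_dvd_mult_iff by blast
  then have "pr m i \<le> l" using assms(4) by (auto dest: dvd_imp_le)
  then show False using pr_gt_twice_rho[OF assms(1)] assms(5) by linarith
qed

lemma multiple_unique:
  assumes "i < rho m" "i' < rho m" "1 \<le> l" "l \<le> 2*rho m" "1 \<le> l'" "l' \<le> 2*rho m"
    and "l * pr m i = l' * pr m i'"
  shows "i = i' \<and> l = l'"
proof (cases "i = i'")
  case True
  then show ?thesis using assms pr_pos[OF assms(1)] by simp
next
  case False
  have "pr m i dvd l' * pr m i'" using assms(7) by (metis dvd_triv_right)
  then show ?thesis using pr_not_dvd_multiple[OF assms(1,2) False assms(5,6)] by blast
qed

lemma multiple_le_kk:
  assumes "i < rho m" "l \<le> 2*rho m"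
  shows "l * pr m i \<le> kk m"
proof -
  have "2 * pr m i \<le> 6*m - 1" using pr_props(3)[OF assms(1)] by linarith
  have "l * pr m i \<le> rho m * (2 * pr m i)" using assms(2) mult_right_mono by fastforce
  also have "\<dots> \<le> rho m * (6*m - 1)" using \<open>2 * pr m i \<le> 6*m - 1\<close> by (rule mult_left_mono) simp
  finally show ?thesis unfolding kk_def by (simp add: mult.commute)
qed

lemma kk_lt_pr_mult:
  assumes "i < rho m" "j < rho m"
  shows "kk m < pr m i * pr m j"
proof -
  have a: "2*m + 1 \<le> pr m i" "2*m+1 \<le> pr m j" using pr_props(2) assms by (auto simp: Suc_le_eq)
  have "2 * kk m = (6*m-1) * (2*rho m)" unfolding kk_def by simp
  also have "\<dots> \<le> (6*m-1) * m" using rho_bound[of m] by (rule mult_left_mono) simp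
  also have "\<dots> < 2 * ((2*m+1)*(2*m+1))" by (simp add: algebra_simps)
  also have "\<dots> \<le> 2 * (pr m i * pr m j)" using mult_mono[OF a] by simp
  finally show ?thesis by simp
qed

lemma kk_pos:
  assumes "0 < rho m"
  shows "0 < kk m"
proof -
  have "0 < m" using pr_props(2,3)[OF assms] by linarith
  then show ?thesis using assms unfolding kk_def by simp
qed

lemma rho_pr_lt_kk:
  assumes "i < rho m"
  shows "rho m * pr m i < kk m"
proof -
  have "pr m i < 6*m - 1" using pr_props(3)[OF assms] by linarith
  then show ?thesis using assms unfolding kk_def by (simp add: mult.commute)
qed

lemma abar_at:
  assumes "i < rho m" "1 \<le> l" "l \<le> 2*rho m"
  shows "abar m (l * pr m i) = wt m l"
proof -
  have "(SOME l'. \<exists>i'. i' < rho m \<and> 1 \<le> l' \<and> l' \<le> 2 * rho m \<and> l * pr m i = l' * pr m i') = l"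
  proof (rule some_equality)
    fix l' assume "\<exists>i'. i' < rho m \<and> 1 \<le> l' \<and> l' \<le> 2 * rho m \<and> l * pr m i = l' * pr m i'"
    then show "l' = l" using multiple_unique[of i m _ l l'] assms by auto
  qed (use assms in blast)
  then show ?thesis unfolding abar_def using assms by auto
qed

lemma abar_out:
  "\<not> (\<exists>i l. i < rho m \<and> 1 \<le> l \<and> l \<le> 2*rho m \<and> j = l * pr m i) \<Longrightarrow> abar m j = 0"
  unfolding abar_def by auto

lemma wt_le2: "wt m l \<le> 2"
  unfolding wt_def by auto

lemma sum_const_ivl:
  "(\<And>l. l \<in> {a..b} \<Longrightarrow> f l = c) \<Longrightarrow> (\<Sum>l\<in>{a..b::nat}. f l) = real (b + 1 - a) * c"
  by (simp add: sum.cong[of "{a..b}" "{a..b}" f "\<lambda>_. c"])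

lemma wt_sum:
  assumes "rho m \<ge> 2"
  shows "(\<Sum>l\<in>{1..2*rho m}. wt m l) = 2 * real (rho m)"
proof (cases "even (rho m)")
  case True
  then obtain s where s: "rho m = 2*s" by (auto elim: evenE)
  have "(\<Sum>l\<in>{1..2*rho m}. wt m l) = (\<Sum>l\<in>{1..3*s + s}. wt m l)" using s by (simp add: algebra_simps)
  also have "\<dots> = (\<Sum>l\<in>{1..3*s}. wt m l) + (\<Sum>l\<in>{3*s+1..3*s+s}. wt m l)"
    by (rule sum.ub_add_nat) simp
  also have "(\<Sum>l\<in>{1..3*s}. wt m l) = real (3*s+1-1) * 2"
    by (rule sum_const_ivl) (use True s in \<open>auto simp: wt_def\<close>)
  also have "(\<Sum>l\<in>{3*s+1..3*s+s}. wt m l) = real (3*s+s+1-(3*s+1)) * (-2)"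
    by (rule sum_const_ivl) (use True s in \<open>auto simp: wt_def\<close>)
  finally show ?thesis using s by simp
next
  case False
  then obtain s where s: "rho m = 2*s+1" by (auto elim: oddE)
  have s1: "s \<ge> 1" using assms s by simp
  have "(\<Sum>l\<in>{1..2*rho m}. wt m l) = (\<Sum>l\<in>{1..(3*s+1) + (s+1)}. wt m l)" using s by (simp add: algebra_simps)
  also have "\<dots> = (\<Sum>l\<in>{1..3*s+1}. wt m l) + (\<Sum>l\<in>{3*s+2..4*s + 2}. wt m l)"
    using sum.ub_add_nat[of 1 "3*s+1" "wt m" "s+1"] by (simp add: algebra_simps)
  also have "(\<Sum>l\<in>{3*s+2..4*s + 2}. wt m l) = (\<Sum>l\<in>{3*s+2..4*s}. wt m l) + (\<Sum>l\<in>{4*s+1..4*s+2}. wt m l)"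
    using sum.ub_add_nat[of "3*s+2" "4*s" "wt m" 2] s1 by simp
  also have "(\<Sum>l\<in>{1..3*s+1}. wt m l) = real (3*s+1+1-1) * 2"
    by (rule sum_const_ivl) (use False s s1 in \<open>auto simp: wt_def\<close>)
  also have "(\<Sum>l\<in>{3*s+2..4*s}. wt m l) = real (4*s+1-(3*s+2)) * (-2)"
    by (rule sum_const_ivl) (use False s s1 in \<open>auto simp: wt_def\<close>)
  also have "(\<Sum>l\<in>{4*s+1..4*s+2}. wt m l) = real (4*s+2+1-(4*s+1)) * (-1)"
    by (rule sum_const_ivl) (use False s s1 in \<open>auto simp: wt_def\<close>)
  finally show ?thesis using s1 by (simp add: s of_nat_diff)
qed

lemma abar_reindex:
  fixes F :: "real \<Rightarrow> real" and G :: "nat \<Rightarrow> real"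
  assumes F0: "F 0 = 0"
  shows "(\<Sum>j\<in>{1..kk m}. F (abar m j) * G j)
       = (\<Sum>i<rho m. \<Sum>l\<in>{1..2*rho m}. F (wt m l) * G (l * pr m i))"
proof -
  let ?I = "{..<rho m} \<times> {1..2*rho m}"
  let ?S = "(\<lambda>(i,l). l * pr m i) ` ?I"
  have sub: "?S \<subseteq> {1..kk m}"
  proof
    fix j assume "j \<in> ?S"
    then obtain i l where il: "i < rho m" "1 \<le> l" "l \<le> 2*rho m" "j = l * pr m i" by auto
    then show "j \<in> {1..kk m}" using pr_pos[OF il(1)] multiple_le_kk[OF il(1) il(3)]
      by (auto simp: Suc_le_eq)
  qed
  have "(\<Sum>j\<in>{1..kk m}. F (abar m j) * G j) = (\<Sum>j\<in>?S. F (abar m j) * G j)"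
  proof (rule sum.mono_neutral_right[OF _ sub])
    show "\<forall>j\<in>{1..kk m} - ?S. F (abar m j) * G j = 0"
    proof
      fix j assume "j \<in> {1..kk m} - ?S"
      then have "abar m j = 0" by (intro abar_out) auto
      then show "F (abar m j) * G j = 0" using F0 by simp
    qed
  qed simp
  also have "\<dots> = (\<Sum>(i,l)\<in>?I. F (abar m (l * pr m i)) * G (l * pr m i))"
  proof (subst sum.reindex)
    show "inj_on (\<lambda>(i,l). l * pr m i) ?I"
      by (rule inj_onI) (use multiple_unique in auto)
  qed (simp add: case_prod_unfold)
  also have "\<dots> = (\<Sum>(i,l)\<in>?I. F (wt m l) * G (l * pr m i))"
    by (rule sum.cong) (auto simp: abar_at)
  also have "\<dots> = (\<Sum>i<rho m. \<Sum>l\<in>{1..2*rho m}. F (wt m l) * G (l * pr m i))"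
    by (rule sum.cartesian_product[symmetric])
  finally show ?thesis .
qed
text \<open>Both \<open>xs\<close> and \<open>ys\<close> turn out to be such pulse trains.\<close>

definition pulse :: "nat \<Rightarrow> nat \<Rightarrow> nat \<Rightarrow> real" where
  "pulse m i t = (if t mod pr m i = kk m mod pr m i then 1 else 0)"

lemma pulse_vals: "pulse m i t = 0 \<or> pulse m i t = 1"
  unfolding pulse_def by auto

lemma pulse_nonneg: "0 \<le> pulse m i t"
  unfolding pulse_def by simp

lemma mod_diff_eq_iff: "(x::nat) \<le> t \<Longrightarrow> ((t - x) mod p = t mod p) = (p dvd x)"
  using mod_eq_dvd_iff_nat[of "t - x" t p] by (simp add: eq_commute)

lemma pulse_back_own:
  assumes "i < rho m" "l \<le> 2*rho m" "kk m \<le> t"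
  shows "pulse m i (t - l * pr m i) = pulse m i t"
proof -
  have "l * pr m i \<le> t" using multiple_le_kk[OF assms(1,2)] assms(3) by linarith
  then have "(t - l * pr m i) mod pr m i = t mod pr m i" using mod_diff_eq_iff by simp
  then show ?thesis unfolding pulse_def by simp
qed

lemma pulse_back_other:
  assumes "i < rho m" "i' < rho m" "i \<noteq> i'" "1 \<le> l" "l \<le> 2*rho m" "kk m \<le> t"
    and "pulse m i t = 1"
  shows "pulse m i (t - l * pr m i') = 0"
proof -
  have le: "l * pr m i' \<le> t" using multiple_le_kk[OF assms(2,5)] assms(6) by linarith
  have "\<not> pr m i dvd l * pr m i'" using pr_not_dvd_multiple assms by blast
  then have "(t - l * pr m i') mod pr m i \<noteq> t mod pr m i" using mod_diff_eq_iff[OF le] by simp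
  then show ?thesis using assms(7) unfolding pulse_def by (simp split: if_splits)
qed

text \<open>Along the multiples of another prime \<open>p\<^sub>i'\<close>, the pulse train of \<open>p\<^sub>i\<close> fires at most once,
  since two hits would make \<open>p\<^sub>i\<close> divide a small multiple of \<open>p\<^sub>i'\<close>.\<close>

lemma pulse_hits_at_most_once:
  assumes i: "i < rho m" and i': "i' < rho m" and ne: "i \<noteq> i'" and t: "kk m \<le> t"
  shows "card {l \<in> {1..2*rho m}. pulse m i (t - l * pr m i') = 1} \<le> 1"
proof -
  let ?E = "{l \<in> {1..2*rho m}. pulse m i (t - l * pr m i') = 1}"
  have key: "a = b" if a: "a \<in> ?E" and b: "b \<in> ?E" and ab: "a \<le> b" for a b
  proof (rule ccontr)
    assume "a \<noteq> b"
    have leb: "b * pr m i' \<le> t" using multiple_le_kk[of i' m b] i' b t by auto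
    have split: "t - a * pr m i' = (t - b * pr m i') + (b - a) * pr m i'"
      using leb ab by (simp add: diff_mult_distrib)
    have "(t - a * pr m i') mod pr m i = (t - b * pr m i') mod pr m i"
      using a b by (simp add: pulse_def split: if_splits)
    then have "pr m i dvd (b - a) * pr m i'"
      using mod_diff_eq_iff[of "(b - a) * pr m i'" "t - a * pr m i'" "pr m i"] split by simp
    moreover have "1 \<le> b - a" "b - a \<le> 2 * rho m" using ab b \<open>a \<noteq> b\<close> by auto
    ultimately show False using pr_not_dvd_multiple[OF i i' ne] by blast
  qed
  have "card ?E \<le> Suc 0"
  proof (subst card_le_Suc0_iff_eq, simp, intro ballI)
    fix a b assume "a \<in> ?E" "b \<in> ?E"
    then show "a = b" using key[of a b] key[of b a] by (cases "a \<le> b") auto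
  qed
  then show ?thesis by simp
qed

lemma weighted_sum_firing:
  assumes r2: "rho m \<ge> 2" and i: "i < rho m" and t: "kk m \<le> t" and fire: "pulse m i t = 1"
  shows "(\<Sum>j\<in>{1..kk m}. abar m j * pulse m i (t - j)) = 2 * real (rho m)"
proof -
  have "(\<Sum>j\<in>{1..kk m}. abar m j * pulse m i (t - j))
      = (\<Sum>i'<rho m. \<Sum>l\<in>{1..2*rho m}. wt m l * pulse m i (t - l * pr m i'))"
    using abar_reindex[of "\<lambda>x. x" m "\<lambda>j. pulse m i (t - j)"] by simp
  also have "\<dots> = (\<Sum>i'<rho m. if i' = i then 2 * real (rho m) else 0)"
  proof (rule sum.cong[OF refl])
    fix i' assume i': "i' \<in> {..<rho m}"
    show "(\<Sum>l\<in>{1..2*rho m}. wt m l * pulse m i (t - l * pr m i'))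
        = (if i' = i then 2 * real (rho m) else 0)"
    proof (cases "i' = i")
      case True
      then show ?thesis using pulse_back_own[OF i _ t] fire wt_sum[OF r2] by simp
    next
      case False
      then show ?thesis using pulse_back_other[OF i _ _ _ _ t fire] i' by (simp add: sum.neutral)
    qed
  qed
  also have "\<dots> = 2 * real (rho m)" using i by (simp add: sum.delta)
  finally show ?thesis .
qed

text \<open>Threshold behaviour, silent case: when the pulse train is silent at \<open>t\<close>, every input
  dominated by the pulse train stays at least \<open>2\<close> below the threshold: each other prime
  contributes at most one positive weight \<open>\<le> 2\<close>, and the own prime contributes nothing.\<close>

lemma weighted_sum_silent:
  assumes r2: "rho m \<ge> 2" and i: "i < rho m" and t: "kk m \<le> t" and silent: "pulse m i t = 0"
    and psi: "\<And>j. j \<in> {1..kk m} \<Longrightarrow> 0 \<le> psi j \<and> psi j \<le> pulse m i (t - j)"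
  shows "(\<Sum>j\<in>{1..kk m}. abar m j * psi j) \<le> 2 * real (rho m) - 2"
proof -
  have "(\<Sum>j\<in>{1..kk m}. abar m j * psi j) \<le> (\<Sum>j\<in>{1..kk m}. max (abar m j) 0 * pulse m i (t - j))"
  proof (rule sum_mono)
    fix j assume j: "j \<in> {1..kk m}"
    show "abar m j * psi j \<le> max (abar m j) 0 * pulse m i (t - j)"
      using psi[OF j] by (cases "abar m j \<ge> 0") (auto simp: mult_left_mono mult_nonpos_nonneg)
  qed
  also have "\<dots> = (\<Sum>i'<rho m. \<Sum>l\<in>{1..2*rho m}. max (wt m l) 0 * pulse m i (t - l * pr m i'))"
    using abar_reindex[of "\<lambda>x. max x 0" m "\<lambda>j. pulse m i (t - j)"] by simp
  also have "\<dots> \<le> (\<Sum>i'<rho m. 2 - (if i' = i then 2 else 0))"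
  proof (rule sum_mono)
    fix i' assume i': "i' \<in> {..<rho m}"
    show "(\<Sum>l\<in>{1..2*rho m}. max (wt m l) 0 * pulse m i (t - l * pr m i'))
        \<le> 2 - (if i' = i then 2 else 0)"
    proof (cases "i' = i")
      case True
      then show ?thesis using pulse_back_own[OF i _ t] silent by simp
    next
      case False
      let ?E = "{l \<in> {1..2*rho m}. pulse m i (t - l * pr m i') = 1}"
      have "(\<Sum>l\<in>{1..2*rho m}. max (wt m l) 0 * pulse m i (t - l * pr m i'))
          = (\<Sum>l\<in>?E. max (wt m l) 0)"
        by (subst sum.inter_filter) (auto intro!: sum.cong simp: pulse_def)
      also have "\<dots> \<le> 2 * real (card ?E)"
        using sum_mono[of ?E "\<lambda>l. max (wt m l) 0" "\<lambda>_. 2"] by (simp add: wt_le2)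
      also have "\<dots> \<le> 2" using pulse_hits_at_most_once[OF i _ _ t, of i'] i' False by simp
      finally show ?thesis using False by simp
    qed
  qed
  also have "\<dots> = 2 * real (rho m) - 2"
    using i by (simp add: sum_subtractf sum.delta)
  finally show ?thesis .
qed

lemma pulse_recurrence:
  assumes "rho m \<ge> 2" "i < rho m" "kk m \<le> t"
  shows "step ((\<Sum>j\<in>{1..kk m}. abar m j * pulse m i (t - j)) - thetabar m) = pulse m i t"
proof (cases "pulse m i t = 1")
  case True
  then show ?thesis using weighted_sum_firing[OF assms True] by (simp add: thetabar_def step_def)
next
  case False
  then have "pulse m i t = 0" using pulse_vals by blast
  moreover from this have "(\<Sum>j\<in>{1..kk m}. abar m j * pulse m i (t - j)) \<le> 2 * real (rho m) - 2"
    by (rule weighted_sum_silent[OF assms]) (simp add: pulse_nonneg)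
  ultimately show ?thesis by (simp add: thetabar_def step_def)
qed

lemma initial_firing_iff:
  assumes i: "i < rho m" and t: "t < kk m"
  shows "(\<exists>l. l < mu m i \<and> t = beta0 m i + l * pr m i) \<longleftrightarrow> t mod pr m i = kk m mod pr m i"
proof -
  let ?P = "pr m i"
  have b: "beta0 m i = kk m mod ?P" unfolding beta0_def mu_def by (simp add: minus_mult_div_eq_mod)
  show ?thesis
  proof
    assume "\<exists>l. l < mu m i \<and> t = beta0 m i + l * pr m i"
    then obtain l where "t = kk m mod ?P + l * ?P" using b by auto
    then show "t mod ?P = kk m mod ?P" by simp
  next
    assume h: "t mod ?P = kk m mod ?P"
    have e1: "t = ?P * (t div ?P) + kk m mod ?P" using h by (metis div_mult_mod_eq mult.commute)
    have e2: "kk m = ?P * (kk m div ?P) + kk m mod ?P" by (metis div_mult_mod_eq mult.commute)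
    have "t div ?P < kk m div ?P"
    proof (rule ccontr)
      assume "\<not> t div ?P < kk m div ?P"
      then have "?P * (kk m div ?P) \<le> ?P * (t div ?P)" by simp
      then show False using e1 e2 t by linarith
    qed
    then show "\<exists>l. l < mu m i \<and> t = beta0 m i + l * pr m i"
      using e1 b unfolding mu_def by (intro exI[of _ "t div ?P"]) (simp add: mult.commute)
  qed
qed

lemma xs_pulse:
  assumes r2: "rho m \<ge> 2" and i: "i < rho m"
  shows "xs m i t = pulse m i t"
proof (induction t rule: less_induct)
  case (less t)
  show ?case
  proof (cases "t < kk m")
    case True
    then show ?thesis using initial_firing_iff[OF i True] by (subst xs.simps) (simp add: pulse_def)
  next
    case False
    have "(\<Sum>j\<in>{1..kk m}. abar m j * xs m i (t - j)) = (\<Sum>j\<in>{1..kk m}. abar m j * pulse m i (t - j))"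
      by (rule sum.cong[OF refl]) (use False less in auto)
    then show ?thesis using False pulse_recurrence[OF r2 i] by (subst xs.simps) simp
  qed
qed

lemma bb_reindex:
  fixes G :: "nat \<Rightarrow> real"
  assumes r: "rho m > 0"
  shows "(\<Sum>f\<in>{1..hh m}. bb m f * G f) = (\<Sum>j\<in>{1..kk m}. abar m j * G (rho m * j))"
proof -
  let ?S = "(\<lambda>j. rho m * j) ` {1..kk m}"
  have sub: "?S \<subseteq> {1..hh m}" using r by (auto simp: hh_def)
  have "(\<Sum>f\<in>{1..hh m}. bb m f * G f) = (\<Sum>f\<in>?S. bb m f * G f)"
  proof (rule sum.mono_neutral_right[OF _ sub])
    show "\<forall>f\<in>{1..hh m} - ?S. bb m f * G f = 0"
    proof
      fix f assume f: "f \<in> {1..hh m} - ?S"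
      have "\<not> (rho m dvd f \<and> 1 \<le> f div rho m \<and> f div rho m \<le> kk m)"
      proof
        assume "rho m dvd f \<and> 1 \<le> f div rho m \<and> f div rho m \<le> kk m"
        then have "f \<in> ?S" by (intro image_eqI[of _ _ "f div rho m"]) auto
        then show False using f by simp
      qed
      then have "bb m f = 0" unfolding bb_def by meson
      then show "bb m f * G f = 0" by simp
    qed
  qed simp
  also have "\<dots> = (\<Sum>j\<in>{1..kk m}. bb m (rho m * j) * G (rho m * j))"
    by (rule sum.reindex_cong[of "\<lambda>j. rho m * j"]) (use r in \<open>simp_all add: inj_on_def\<close>)
  also have "\<dots> = (\<Sum>j\<in>{1..kk m}. abar m j * G (rho m * j))"
    by (rule sum.cong[OF refl]) (use r in \<open>simp add: bb_def\<close>)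
  finally show ?thesis .
qed

lemma sub_mult_mod_div:
  assumes "r * j \<le> (n::nat)" "r > 0"
  shows "(n - r * j) mod r = n mod r" "(n - r * j) div r = n div r - j"
proof -
  obtain a where a: "n = a + r * j" using assms(1) by (metis le_add_diff_inverse2)
  show "(n - r * j) mod r = n mod r" "(n - r * j) div r = n div r - j"
    unfolding a using assms(2) by simp_all
qed

lemma lag_le:
  assumes "hh m \<le> n" "j \<le> kk m"
  shows "rho m * j \<le> n"
  using assms mult_le_mono2[of j "kk m" "rho m"] unfolding hh_def by linarith

lemma kk_le_div:
  assumes "rho m > 0" "hh m \<le> n"
  shows "kk m \<le> n div rho m"
  using assms div_le_mono[of "rho m * kk m" n "rho m"] by (simp add: hh_def)

lemma ys_pulse:
  assumes r2: "rho m \<ge> 2"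
  shows "ys m n = pulse m (n mod rho m) (1 + n div rho m)"
proof (induction n rule: less_induct)
  case (less n)
  have r: "rho m > 0" using r2 by simp
  let ?i = "n mod rho m" and ?T = "1 + n div rho m"
  have i: "?i < rho m" using r by simp
  show ?case
  proof (cases "n < hh m")
    case True
    then show ?thesis using xs_pulse[OF r2 i] by (subst ys.simps) simp
  next
    case False
    have kd: "kk m \<le> n div rho m" using kk_le_div[OF r] False by simp
    have "(\<Sum>f\<in>{1..hh m}. bb m f * ys m (n - f)) = (\<Sum>j\<in>{1..kk m}. abar m j * ys m (n - rho m * j))"
      by (rule bb_reindex[OF r])
    also have "\<dots> = (\<Sum>j\<in>{1..kk m}. abar m j * pulse m ?i (?T - j))"
    proof (rule sum.cong[OF refl])
      fix j assume j: "j \<in> {1..kk m}"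
      have le: "rho m * j \<le> n" using lag_le[of m n j] j False by simp
      have "0 < rho m * j" using j r by simp
      then have "n - rho m * j < n" using le by linarith
      moreover have "Suc (n div rho m - j) = Suc (n div rho m) - j" using j kd by (simp add: Suc_diff_le)
      ultimately show "abar m j * ys m (n - rho m * j) = abar m j * pulse m ?i (?T - j)"
        using less sub_mult_mod_div[OF le r] by simp
    qed
    finally show ?thesis using False pulse_recurrence[OF r2 i, of ?T] kd by (subst ys.simps) simp
  qed
qed

lemma ys_vals: "rho m \<ge> 2 \<Longrightarrow> ys m n = 0 \<or> ys m n = 1"
  using ys_pulse pulse_vals by metis

lemma ys_one_iff:
  "rho m \<ge> 2 \<Longrightarrow>
   ys m n = 1 \<longleftrightarrow> (1 + n div rho m) mod pr m (n mod rho m) = kk m mod pr m (n mod rho m)"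
  using ys_pulse by (simp add: pulse_def)

lemma ys_lag:
  assumes r2: "rho m \<ge> 2" and n: "hh m \<le> n" and j: "j \<in> {1..kk m}"
  shows "ys m (n - rho m * j) = pulse m (n mod rho m) (1 + n div rho m - j)"
    "(n - rho m * j) mod rho m = n mod rho m" "n - rho m * j < n"
proof -
  have r: "rho m > 0" using r2 by simp
  have le: "rho m * j \<le> n" using lag_le[OF n] j by simp
  have "0 < rho m * j" using j r by simp
  then show "n - rho m * j < n" using le by linarith
  show "(n - rho m * j) mod rho m = n mod rho m" using sub_mult_mod_div[OF le r] by simp
  have "Suc (n div rho m - j) = Suc (n div rho m) - j" using j kk_le_div[OF r n] by (simp add: Suc_diff_le)
  then show "ys m (n - rho m * j) = pulse m (n mod rho m) (1 + n div rho m - j)"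
    using ys_pulse[OF r2, of "n - rho m * j"] sub_mult_mod_div[OF le r] by simp
qed

lemma nat_mod_eq_int: "((a::nat) mod r = b mod r) \<longleftrightarrow> (int r dvd int a - int b)"
proof -
  have "(a mod r = b mod r) \<longleftrightarrow> int a mod int r = int b mod int r"
    by (metis of_nat_eq_iff of_nat_mod)
  also have "\<dots> \<longleftrightarrow> int r dvd int a - int b" by (rule mod_eq_dvd_iff)
  finally show ?thesis .
qed

lemma residue_in_window:
  fixes p b c :: nat
  assumes "0 < p"
  obtains J where "b \<le> J" "J < b + p" "J mod p = c mod p"
proof -
  have b: "b = p * (b div p) + b mod p" by simp
  have lt: "b mod p < p" "c mod p < p" using assms by simp_all
  show ?thesis
  proof (cases "b mod p \<le> c mod p")
    case True
    show ?thesis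
      by (rule that[of "p * (b div p) + c mod p"]) (use True lt b in \<open>linarith, linarith, simp\<close>)
  next
    case False
    have J: "p * (b div p) + p + c mod p = c mod p + p * (b div p + 1)" by (simp add: algebra_simps)
    show ?thesis
      by (rule that[of "c mod p + p * (b div p + 1)"]) (use False lt b J in \<open>linarith, linarith, metis mod_mult_self2 mod_mod_trivial\<close>)
  qed
qed

lemma div_window:
  fixes b q p J :: nat
  assumes "b + q * p \<le> J" "J < b + q * p + p"
  shows "(J - b) div p = q"
proof (rule div_nat_eqI)
  show "p * q \<le> J - b" using assms(1) by (simp add: mult.commute)
  have "J - b < q * p + p" using assms by arith
  then show "J - b < p * Suc q" by (simp add: mult.commute)
qed

lemma firing_difference:
  assumes r2: "rho m \<ge> 2" and u: "ys m u = 1" and u': "ys m u' = 1"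
    and c: "u mod rho m = u' mod rho m"
  shows "int (rho m) * int (pr m (u mod rho m)) dvd int u - int u'"
proof -
  let ?r = "rho m" let ?i = "u mod rho m" let ?P = "pr m ?i"
  have "(1 + u div ?r) mod ?P = (1 + u' div ?r) mod ?P"
    using ys_one_iff[OF r2, of u] ys_one_iff[OF r2, of u'] u u' c by simp
  then have d1: "int ?P dvd int (u div ?r) - int (u' div ?r)"
    unfolding nat_mod_eq_int by simp
  have e1: "int u = int ?r * int (u div ?r) + int ?i"
    by (metis div_mult_mod_eq mult.commute of_nat_add of_nat_mult)
  have e2: "int u' = int ?r * int (u' div ?r) + int ?i"
    using c by (metis div_mult_mod_eq mult.commute of_nat_add of_nat_mult)
  have "int u - int u' = int ?r * (int (u div ?r) - int (u' div ?r))"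
    using e1 e2 by (simp add: algebra_simps)
  then show ?thesis using d1 by (simp add: mult_dvd_mono)
qed

text \<open>Indeed the gap is divisible
  by \<open>rho m\<close> times two distinct primes, whose product exceeds \<open>kk m\<close>.\<close>

lemma firing_pairs_rigid:
  assumes r2: "rho m \<ge> 2"
    and fire: "ys m u = 1" "ys m u' = 1" "ys m v = 1" "ys m v' = 1"
    and same: "u mod rho m = u' mod rho m" and other: "u mod rho m \<noteq> v mod rho m"
    and gap: "int u - int u' = int v - int v'" and small: "\<bar>int u - int u'\<bar> < int (hh m)"
  shows "u = u'"
proof -
  let ?r = "rho m" let ?s = "u mod ?r" let ?t = "v mod ?r"
  define D where "D = int u - int u'"
  have r: "?r > 0" using r2 by simp
  have s: "?s < ?r" "?t < ?r" using r by auto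
  have ds: "int ?r * int (pr m ?s) dvd D"
    using firing_difference[OF r2 fire(1,2) same] unfolding D_def .
  then have "int ?r dvd D" using dvd_mult_left by blast
  then have vv: "v mod ?r = v' mod ?r" using gap unfolding nat_mod_eq_int D_def by simp
  have dt: "int ?r * int (pr m ?t) dvd D"
    using firing_difference[OF r2 fire(3,4) vv] gap unfolding D_def by simp
  obtain E where DE: "D = int ?r * E" using \<open>int ?r dvd D\<close> by (auto elim: dvdE)
  have rnz: "int ?r \<noteq> 0" using r by simp
  have "pr m ?s \<noteq> pr m ?t" using other pr_inj s by blast
  then have "coprime (int (pr m ?s)) (int (pr m ?t))"
    using primes_coprime[OF pr_props(1)[OF s(1)] pr_props(1)[OF s(2)]] by simp
  moreover have "int (pr m ?s) dvd E" "int (pr m ?t) dvd E" using ds dt DE rnz by simp_all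
  ultimately have e3: "int (pr m ?s) * int (pr m ?t) dvd E" by (simp add: divides_mult)
  have "int ?r * \<bar>E\<bar> < int ?r * int (kk m)"
    using small unfolding D_def[symmetric] DE hh_def by (simp add: abs_mult)
  moreover have "int (kk m) < int (pr m ?s) * int (pr m ?t)"
    using kk_lt_pr_mult[OF s] by (metis of_nat_less_iff of_nat_mult)
  ultimately have "\<bar>E\<bar> < int (pr m ?s) * int (pr m ?t)" using r by simp
  then have "E = 0" using e3 dvd_imp_le_int[of E] by (metis abs_of_nat not_le of_nat_mult)
  then show ?thesis using DE unfolding D_def by simp
qed

text \<open>If \<open>l < n mod r\<close> and \<open>r\<close> divides \<open>A\<close>, then \<open>n - (f + l)\<close> and \<open>A - f\<close> lie in different
  residue classes modulo \<open>r\<close>: their difference is \<open>n mod r - l\<close> modulo \<open>r\<close>.\<close>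

lemma residue_mismatch:
  fixes n A f l r :: nat
  assumes "0 < r" "r dvd A" "l < n mod r" "f + l \<le> n" "f \<le> A"
  shows "(n - (f + l)) mod r \<noteq> (A - f) mod r"
proof
  assume "(n - (f + l)) mod r = (A - f) mod r"
  then have "int r dvd int (n - (f + l)) - int (A - f)" unfolding nat_mod_eq_int .
  moreover have "int (n - (f + l)) - int (A - f) = (int n - int (n mod r)) + (int (n mod r) - int l) - int A"
    using assms(4,5) by simp
  moreover have "int r dvd int n - int (n mod r)" using nat_mod_eq_int[of n r "n mod r"] by simp
  moreover have "int r dvd int A" using assms(2) by simp
  ultimately have "int r dvd int (n mod r) - int l"
    by (metis dvd_add_right_iff dvd_diff diff_add_cancel)
  moreover have "0 < int (n mod r) - int l" using assms(3) by simp
  ultimately have "int r \<le> int (n mod r) - int l" by (rule zdvd_imp_le)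
  moreover have "n mod r < r" using assms(1) by simp
  ultimately show False by simp
qed

definition anchor :: "nat \<Rightarrow> nat \<Rightarrow> nat" where
  "anchor m d = hh m + L1 m d - rho m"

lemma Lcm_prefix_pos:
  assumes "d < rho m"
  shows "0 < Lcm (pr m ` {..d})"
proof -
  have "0 \<notin> pr m ` {..d}"
  proof
    assume "0 \<in> pr m ` {..d}"
    then obtain i where "i \<le> d" "pr m i = 0" by auto
    then show False using pr_pos[of i m] assms by simp
  qed
  then show ?thesis using Lcm_0_iff[of "pr m ` {..d}"] by (metis finite_atMost finite_imageI gr0I)
qed

lemma anchor_eq:
  assumes "0 < rho m"
  shows "anchor m d = rho m * (kk m + Lcm (pr m ` {..d}) - 1)"
  using kk_pos[OF assms] unfolding anchor_def hh_def L1_def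
  by (simp add: algebra_simps diff_mult_distrib2)

lemma B0_iff: "f \<in> B0 m d \<longleftrightarrow> 1 \<le> f \<and> f \<le> hh m - d \<and> ys m (anchor m d - f) = 1"
  unfolding B0_def anchor_def by simp

lemma B0_finite: "finite (B0 m d)"
  unfolding B0_def by (rule finite_subset[of _ "{..hh m}"]) auto

lemma B0_memI:
  assumes d: "d < rho m" and fire: "ys m u = 1"
    and lo: "rho m * Lcm (pr m ` {..d}) \<le> u" and hi: "u < anchor m d"
  shows "anchor m d - u \<in> B0 m d"
proof -
  have r: "0 < rho m" using d by simp
  have "anchor m d - u \<le> anchor m d - rho m * Lcm (pr m ` {..d})" using lo by simp
  also have "\<dots> = rho m * (kk m - 1)"
    using kk_pos[OF r] unfolding anchor_eq[OF r] by (simp add: algebra_simps diff_mult_distrib2)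
  also have "\<dots> \<le> hh m - d" using d kk_pos[OF r] unfolding hh_def by (simp add: diff_mult_distrib2)
  finally show ?thesis using hi fire unfolding B0_iff by simp
qed

lemma window_firing:
  assumes r2: "rho m \<ge> 2" and d: "d < rho m" and i: "i < rho m" and q: "q < rho m"
  obtains J where "Lcm (pr m ` {..d}) + q * pr m i \<le> J" "J < Lcm (pr m ` {..d}) + q * pr m i + pr m i"
    "rho m * J + i < anchor m d" "anchor m d - (rho m * J + i) \<in> B0 m d"
proof -
  let ?r = "rho m" let ?La = "Lcm (pr m ` {..d})" let ?b = "?La + q * pr m i"
  have r: "0 < ?r" using r2 by simp
  obtain J' where J': "?b + 1 \<le> J'" "J' < ?b + 1 + pr m i" "J' mod pr m i = kk m mod pr m i"
    using residue_in_window[OF pr_pos[OF i]] by blast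
  define J where "J = J' - 1"
  have w: "?b \<le> J" "J < ?b + pr m i" "(1 + J) mod pr m i = kk m mod pr m i"
    using J' unfolding J_def by auto
  have "(?r * J + i) mod ?r = i" "(?r * J + i) div ?r = J" using i by auto
  then have fire: "ys m (?r * J + i) = 1" using w ys_one_iff[OF r2] by simp
  have "Suc q * pr m i \<le> ?r * pr m i" using q by (intro mult_le_mono1) simp
  then have "J + 1 < kk m + ?La" using w rho_pr_lt_kk[OF i] by simp
  then have "?r * (J + 1) \<le> anchor m d" unfolding anchor_eq[OF r] by (intro mult_left_mono) auto
  then have lt: "?r * J + i < anchor m d" using i by simp
  have "?r * ?La \<le> ?r * J" using w by (intro mult_left_mono) simp_all
  then have "?r * ?La \<le> ?r * J + i" by linarith
  then have "anchor m d - (?r * J + i) \<in> B0 m d" by (rule B0_memI[OF d fire _ lt])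
  then show ?thesis using that w lt by blast
qed

text \<open>Lower bound \<open>Tot m d \<ge> rho m\<^sup>2\<close>: the firing times of \<open>window_firing\<close> are pairwise distinct,
  being separated by residue class and by window.\<close>

lemma Tot_bound:
  assumes r2: "rho m \<ge> 2" and d: "d < rho m"
  shows "rho m * rho m \<le> Tot m d"
proof -
  let ?r = "rho m" let ?La = "Lcm (pr m ` {..d})" let ?A = "anchor m d"
  define good where "good i q J \<longleftrightarrow> ?La + q * pr m i \<le> J \<and> J < ?La + q * pr m i + pr m i
      \<and> ?r * J + i < ?A \<and> ?A - (?r * J + i) \<in> B0 m d" for i q J
  define J where "J i q = (SOME J. good i q J)" for i q
  have J: "good i q (J i q)" if iq: "i < ?r" "q < ?r" for i q
  proof -
    obtain J0 where "?La + q * pr m i \<le> J0" "J0 < ?La + q * pr m i + pr m i"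
      "?r * J0 + i < ?A" "?A - (?r * J0 + i) \<in> B0 m d"
      by (rule window_firing[OF r2 d iq])
    then have "good i q J0" unfolding good_def by blast
    then show ?thesis unfolding J_def by (rule someI)
  qed
  let ?f = "\<lambda>(i,q). ?A - (?r * J i q + i)"
  have "inj_on ?f ({..<?r} \<times> {..<?r})"
  proof (rule inj_onI, clarify)
    fix i q i' q' assume iq: "i < ?r" "q < ?r" "i' < ?r" "q' < ?r"
      and eq: "?A - (?r * J i q + i) = ?A - (?r * J i' q' + i')"
    have g: "good i q (J i q)" "good i' q' (J i' q')" "good i q' (J i q')"
      using J iq by simp_all
    moreover have "?r * J i q + i < ?A" "?r * J i' q' + i' < ?A" using g unfolding good_def by blast+
    ultimately have "?r * J i q + i = ?r * J i' q' + i'" using eq by (metis diff_diff_cancel less_imp_le)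
    then have "(?r * J i q + i) mod ?r = (?r * J i' q' + i') mod ?r"
      "(?r * J i q + i) div ?r = (?r * J i' q' + i') div ?r" by auto
    then have ii: "i = i'" and jj: "J i q = J i q'" using iq by auto
    have w: "?La + q * pr m i \<le> J i q" "J i q < ?La + q * pr m i + pr m i"
      "?La + q' * pr m i \<le> J i q'" "J i q' < ?La + q' * pr m i + pr m i"
      using g(1,3) unfolding good_def by blast+
    have "q = q'" using div_window[OF w(1,2)] div_window[OF w(3,4)] jj by argo
    with ii show "i = i' \<and> q = q'" by blast
  qed
  then have "card (?f ` ({..<?r} \<times> {..<?r})) = ?r * ?r"
    by (simp add: card_image card_cartesian_product)
  moreover have "?f ` ({..<?r} \<times> {..<?r}) \<subseteq> B0 m d"
  proof clarify
    fix i q assume "i < ?r" "q < ?r"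
    then show "?A - (?r * J i q + i) \<in> B0 m d" using J unfolding good_def by blast
  qed
  then have "card (?f ` ({..<?r} \<times> {..<?r})) \<le> Tot m d"
    unfolding Tot_def by (rule card_mono[OF B0_finite])
  ultimately show ?thesis by simp
qed

lemma AA_memE:
  assumes "g \<in> AA m d"
  obtains l where "l \<le> d" "l \<le> g" "g - l \<in> B0 m d"
  using assms unfolding AA_def Bl_def by auto

lemma AA_subset: "AA m d \<subseteq> {1..hh m}"
proof
  fix g assume "g \<in> AA m d"
  then obtain l where l: "l \<le> d" "l \<le> g" "g - l \<in> B0 m d" by (rule AA_memE)
  then have "1 \<le> g - l" "g - l \<le> hh m - d" unfolding B0_iff by auto
  then show "g \<in> {1..hh m}" using l by auto
qed

text \<open>Upper bound on the number of perturbed lags that see a firing neuron, at a time \<open>n\<close> whose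
  residue exceeds \<open>d\<close>: a lag \<open>g\<close> is determined by its residue modulo \<open>rho m\<close> and its shift \<open>l\<close>.
  Two lags with equal data give two pairs of firing times in the residue classes of
  \<open>n - g\<close> and of \<open>anchor - (g - l)\<close>, which differ; rigidity forces the lags to coincide.\<close>

lemma AA_firing_count:
  assumes r2: "rho m \<ge> 2" and n: "hh m \<le> n" and dn: "d < n mod rho m"
  shows "card {g \<in> AA m d. ys m (n - g) = 1} \<le> rho m * (d + 1)"
proof -
  let ?r = "rho m" let ?A = "anchor m d"
  let ?E = "{g \<in> AA m d. ys m (n - g) = 1}"
  have r: "0 < ?r" using r2 by simp
  have d: "d < ?r" using dn r by (meson order.strict_trans mod_less_divisor)
  have rA: "?r dvd ?A" unfolding anchor_eq[OF r] by simp
  have hA: "hh m \<le> ?A"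
    using Lcm_prefix_pos[OF d] unfolding anchor_eq[OF r] hh_def by (intro mult_left_mono) auto
  define shift where "shift g = (LEAST l. l \<le> d \<and> l \<le> g \<and> g - l \<in> B0 m d)" for g
  have shift: "shift g \<le> d" "shift g \<le> g" "g - shift g \<in> B0 m d" if gA: "g \<in> AA m d" for g
  proof -
    obtain l where "l \<le> d" "l \<le> g" "g - l \<in> B0 m d" using AA_memE[OF gA] .
    then have "l \<le> d \<and> l \<le> g \<and> g - l \<in> B0 m d" by blast
    then show "shift g \<le> d" "shift g \<le> g" "g - shift g \<in> B0 m d"
      unfolding shift_def by (metis (mono_tags, lifting) LeastI)+
  qed
  define phi where "phi g = (g mod ?r, shift g)" for g
  have "phi ` ?E \<subseteq> {..<?r} \<times> {..d}" using shift r unfolding phi_def by auto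
  moreover have "inj_on phi ?E"
  proof (rule inj_onI)
    fix g g' assume g: "g \<in> ?E" and g': "g' \<in> ?E" and e: "phi g = phi g'"
    define l where "l = shift g"
    have gm: "g mod ?r = g' mod ?r" and l': "shift g' = l" using e unfolding phi_def l_def by auto
    define f where "f = g - l" define f' where "f' = g' - l"
    have fB: "f \<in> B0 m d" "f' \<in> B0 m d" and gf: "g = f + l" "g' = f' + l" and ld: "l \<le> d"
      using shift[of g] shift[of g'] g g' l' unfolding f_def f'_def l_def by auto
    have fA: "f \<le> ?A" "f' \<le> ?A" using fB hA unfolding B0_iff by auto
    have gh: "1 \<le> g" "g \<le> hh m" "1 \<le> g'" "g' \<le> hh m" using g g' AA_subset[of m d] by auto
    have "n - g = n - g'"
    proof (rule firing_pairs_rigid[OF r2, where v = "?A - f" and v' = "?A - f'"])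
      show "ys m (n - g) = 1" "ys m (n - g') = 1" using g g' by auto
      show "ys m (?A - f) = 1" "ys m (?A - f') = 1" using fB unfolding B0_iff by auto
      show "(n - g) mod ?r = (n - g') mod ?r"
        using gm gh n unfolding nat_mod_eq_int by (simp add: dvd_diff_commute)
      show "(n - g) mod ?r \<noteq> (?A - f) mod ?r"
        using residue_mismatch[OF r rA _ _ fA(1), of l n] ld dn gf gh n by simp
      show "int (n - g) - int (n - g') = int (?A - f) - int (?A - f')"
        using gh n fA gf by simp
      show "\<bar>int (n - g) - int (n - g')\<bar> < int (hh m)" using gh n by simp
    qed
    then show "g = g'" using gh n by simp
  qed
  ultimately have "card ?E \<le> card ({..<?r} \<times> {..d})" by (meson card_inj_on_le finite_SigmaI finite_atMost finite_lessThan)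
  then show ?thesis by (simp add: card_cartesian_product)
qed

lemma zs_range:
  assumes "rho m \<ge> 2"
  shows "0 \<le> zs m lam n d \<and> zs m lam n d \<le> 1"
  using ys_vals[OF assms, of n] unfolding zs.simps[of m lam n d] by (auto simp: step_def)

lemma zs_recurrence:
  assumes r: "0 < rho m" and n: "hh m \<le> n"
  shows "zs m lam n d = step ((\<Sum>j\<in>{1..kk m}. abar m j * zs m lam (n - rho m * j) d)
           + betad m lam d * (\<Sum>g\<in>AA m d. zs m lam (n - g) d) - theta2 m lam d)"
proof -
  let ?z = "\<lambda>k. zs m lam k d"
  have "(\<Sum>f\<in>{1..hh m}. cc m lam f d * ?z (n - f))
      = (\<Sum>f\<in>{1..hh m}. bb m f * ?z (n - f) + (if f \<in> AA m d then betad m lam d * ?z (n - f) else 0))"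
    by (rule sum.cong) (simp_all add: cc_def algebra_simps)
  also have "\<dots> = (\<Sum>f\<in>{1..hh m}. bb m f * ?z (n - f))
      + (\<Sum>f\<in>{1..hh m} \<inter> AA m d. betad m lam d * ?z (n - f))"
    by (simp add: sum.distrib sum.inter_restrict)
  also have "{1..hh m} \<inter> AA m d = AA m d" using AA_subset by blast
  also have "(\<Sum>f\<in>{1..hh m}. bb m f * ?z (n - f)) = (\<Sum>j\<in>{1..kk m}. abar m j * ?z (n - rho m * j))"
    by (rule bb_reindex[OF r])
  finally show ?thesis using n by (subst zs.simps) (simp add: sum_distrib_left)
qed

lemma betad_nonpos: "lam < 0 \<Longrightarrow> betad m lam d \<le> 0"
  unfolding betad_def by (simp add: divide_nonpos_nonneg)

lemma theta2_eq: "theta2 m lam d = 2 * real (rho m) + lam - betad m lam d / 8"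
  unfolding theta2_def xid_def thetabar_def by simp

text \<open>Silent step: where \<open>ys\<close> is silent and the perturbed network has so far stayed below
  \<open>ys\<close>, the perturbed neuron stays silent as well, since the perturbation only lowers the input
  and raises the threshold by at most \<open>1\<close>.\<close>

lemma zs_silent:
  assumes r2: "rho m \<ge> 2" and n: "hh m \<le> n" and lam: "-1 \<le> lam" "lam < 0"
    and silent: "ys m n = 0"
    and below: "\<And>j. j \<in> {1..kk m} \<Longrightarrow> zs m lam (n - rho m * j) d \<le> ys m (n - rho m * j)"
  shows "zs m lam n d = 0"
proof -
  let ?z = "\<lambda>k. zs m lam k d" and ?i = "n mod rho m" and ?T = "1 + n div rho m"
  have r: "0 < rho m" using r2 by simp
  have i: "?i < rho m" using r by simp
  have T: "kk m \<le> ?T" using kk_le_div[OF r n] by simp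
  have "pulse m ?i ?T = 0" using silent ys_pulse[OF r2, of n] by simp
  then have S: "(\<Sum>j\<in>{1..kk m}. abar m j * ?z (n - rho m * j)) \<le> 2 * real (rho m) - 2"
    by (rule weighted_sum_silent[OF r2 i T]) (use below zs_range[OF r2] ys_lag[OF r2 n] in auto)
  have "0 \<le> (\<Sum>g\<in>AA m d. ?z (n - g))" by (rule sum_nonneg) (use zs_range[OF r2] in auto)
  then have "betad m lam d * (\<Sum>g\<in>AA m d. ?z (n - g)) \<le> 0"
    using betad_nonpos[OF lam(2)] by (simp add: mult_nonpos_nonneg)
  then have "(\<Sum>j\<in>{1..kk m}. abar m j * ?z (n - rho m * j))
      + betad m lam d * (\<Sum>g\<in>AA m d. ?z (n - g)) - theta2 m lam d < 0"
    using S lam betad_nonpos[OF lam(2), of m d] unfolding theta2_eq by linarith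
  then show ?thesis unfolding zs_recurrence[OF r n] by (simp add: step_def)
qed

text \<open>Where the perturbed network stays below \<open>ys\<close> on the perturbed lags and the residue of \<open>n\<close>
  exceeds \<open>d\<close>, the activity seen through these lags is less than \<open>Tot m d\<close>: at most
  \<open>rho m (d + 1)\<close> of them see a firing neuron, while \<open>Tot m d \<ge> rho m\<^sup>2\<close>.\<close>

lemma perturbed_activity_bound:
  assumes r2: "rho m \<ge> 2" and n: "hh m \<le> n" and dn: "d < n mod rho m"
    and below: "\<And>g. g \<in> AA m d \<Longrightarrow> zs m lam (n - g) d \<le> ys m (n - g)"
  shows "(\<Sum>g\<in>AA m d. zs m lam (n - g) d) + 1 \<le> real (Tot m d)"
proof -
  have r: "0 < rho m" using r2 by simp
  have "(\<Sum>g\<in>AA m d. zs m lam (n - g) d) \<le> (\<Sum>g\<in>AA m d. if ys m (n - g) = 1 then 1 else 0)"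
  proof (rule sum_mono)
    fix g assume "g \<in> AA m d"
    then show "zs m lam (n - g) d \<le> (if ys m (n - g) = 1 then 1 else 0)"
      using below[of g] ys_vals[OF r2, of "n - g"] by auto
  qed
  also have "\<dots> = real (card {g \<in> AA m d. ys m (n - g) = 1})"
    using finite_subset[OF AA_subset[of m d]] by (simp add: sum.If_cases Collect_conj_eq Int_commute)
  also have "\<dots> \<le> real (rho m * (d + 1))" using AA_firing_count[OF r2 n dn] by linarith
  finally have le: "(\<Sum>g\<in>AA m d. zs m lam (n - g) d) \<le> real (rho m * (d + 1))" .
  have d: "d + 1 < rho m" using dn mod_less_divisor[OF r, of n] by linarith
  then have "rho m * (d + 1) < rho m * rho m" by (rule mult_strict_left_mono) (rule r)
  moreover have "rho m * rho m \<le> Tot m d" using d by (intro Tot_bound[OF r2]) simp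
  ultimately have "rho m * (d + 1) + 1 \<le> Tot m d" by linarith
  then have "real (rho m * (d + 1) + 1) \<le> real (Tot m d)" by (simp only: of_nat_le_iff)
  then show ?thesis using le by simp
qed

text \<open>Firing step: where \<open>ys\<close> fires at a time of residue \<open>> d\<close>, and the perturbed network agrees
  with \<open>ys\<close> in this residue class and stays below it on the perturbed lags, the perturbed neuron
  fires: the unperturbed input reaches the threshold exactly, and the loss \<open>betad m lam d\<close>
  times the perturbed activity is compensated by the shift \<open>xid\<close> of the threshold.\<close>

lemma zs_firing:
  assumes r2: "rho m \<ge> 2" and n: "hh m \<le> n" and lam: "lam < 0"
    and fire: "ys m n = 1" and dn: "d < n mod rho m"
    and exact: "\<And>j. j \<in> {1..kk m} \<Longrightarrow> zs m lam (n - rho m * j) d = ys m (n - rho m * j)"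
    and below: "\<And>g. g \<in> AA m d \<Longrightarrow> zs m lam (n - g) d \<le> ys m (n - g)"
  shows "zs m lam n d = 1"
proof -
  let ?z = "\<lambda>k. zs m lam k d" and ?i = "n mod rho m" and ?T = "1 + n div rho m"
  define Nz where "Nz = (\<Sum>g\<in>AA m d. ?z (n - g))"
  have r: "0 < rho m" using r2 by simp
  have i: "?i < rho m" using r by simp
  have T: "kk m \<le> ?T" using kk_le_div[OF r n] by simp
  have "(\<Sum>j\<in>{1..kk m}. abar m j * ?z (n - rho m * j)) = (\<Sum>j\<in>{1..kk m}. abar m j * pulse m ?i (?T - j))"
    by (rule sum.cong) (simp_all add: exact ys_lag[OF r2 n])
  also have "\<dots> = 2 * real (rho m)"
    using weighted_sum_firing[OF r2 i T] fire ys_pulse[OF r2, of n] by simp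
  finally have S: "(\<Sum>j\<in>{1..kk m}. abar m j * ?z (n - rho m * j)) = 2 * real (rho m)" .
  have "Nz + 1 \<le> real (Tot m d)"
    unfolding Nz_def by (rule perturbed_activity_bound[OF r2 n dn below])
  then have "(Nz + 1/8) / real (Tot m d) \<le> 1" by (simp add: divide_le_eq)
  then have "0 \<le> lam * ((Nz + 1/8) / real (Tot m d) - 1)" using lam by (intro mult_nonpos_nonpos) auto
  also have "lam * ((Nz + 1/8) / real (Tot m d) - 1) = betad m lam d * (Nz + 1/8) - lam"
    unfolding betad_def by (simp add: field_simps)
  finally show ?thesis
    using S unfolding zs_recurrence[OF r n] theta2_eq Nz_def by (simp add: step_def algebra_simps)
qed

lemma zs_invariant:
  assumes r2: "rho m \<ge> 2" and lam: "-1 \<le> lam" "lam < 0"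
  shows "zs m lam n d \<le> ys m n \<and> (d < n mod rho m \<longrightarrow> zs m lam n d = ys m n)"
proof (induction n rule: less_induct)
  case (less n)
  show ?case
  proof (cases "n < hh m")
    case True
    then show ?thesis by (simp add: zs.simps[of m lam n d])
  next
    case False
    then have n: "hh m \<le> n" by simp
    show ?thesis
    proof (cases "ys m n = 1")
      case True
      have "zs m lam n d \<le> ys m n" using True zs_range[OF r2] by simp
      moreover have "zs m lam n d = 1" if dn: "d < n mod rho m"
      proof (rule zs_firing[OF r2 n lam(2) True dn])
        fix j assume "j \<in> {1..kk m}"
        then show "zs m lam (n - rho m * j) d = ys m (n - rho m * j)"
          using less ys_lag[OF r2 n] dn by metis
      next
        fix g assume "g \<in> AA m d"
        then have "n - g < n" using AA_subset n by fastforce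
        then show "zs m lam (n - g) d \<le> ys m (n - g)" using less by blast
      qed
      ultimately show ?thesis using True by simp
    next
      case False
      then have "ys m n = 0" using ys_vals[OF r2] by blast
      moreover from this have "zs m lam n d = 0"
        by (rule zs_silent[OF r2 n lam]) (use less ys_lag[OF r2 n] in blast)
      ultimately show ?thesis by simp
    qed
  qed
qed

theorem lemma19:
  fixes m d t :: nat and lam :: real
  assumes "m > 0" and "rho m \<ge> 2"
    and "-1 \<le> lam" and "lam < 0"
    and "d \<le> rho m - 1"
    and "L1 m d + hh m - rho m + d + 1 \<le> t" and "t \<le> L1 m d + hh m - 1"
  shows "zs m lam t d = ys m t"
proof -
  let ?r = "rho m"
  define q where "q = Lcm (pr m ` {..d}) + kk m - 1"
  have r: "0 < ?r" using assms(2) by simp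
  have "L1 m d + hh m = ?r * (q + 1)"
    using kk_pos[OF r] unfolding q_def L1_def hh_def by (simp add: algebra_simps)
  then have "?r * q + d + 1 \<le> t" "t < ?r * q + ?r" using assms(6,7) r by (simp_all add: algebra_simps)
  then have "t div ?r = q" by (intro div_nat_eqI) simp_all
  then have "t = ?r * q + t mod ?r" by (metis div_mult_mod_eq mult.commute)
  then have "d < t mod ?r" using \<open>?r * q + d + 1 \<le> t\<close> by linarith
  then show ?thesis using zs_invariant[OF assms(2-4)] by blast
qed
end
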